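(* Let $\mathbf A\in\mathbb C^{m\times n}$, $\mathbf y\in\mathbb C^{1\times n}$, consider the system $\mathbf x\mathbf A=\mathbf y$ with unknown row vector $\mathbf x\in\mathbb C^{1\times m}$, and let $\mathbf x^{0}=\mathbf y\mathbf A^{+}=(x^{0}_1,\dots,x^{0}_m)$. Put $\mathbf g=\mathbf y\mathbf A^{*}$. (i) If $\operatorname{rank}\mathbf A=m$, then for all $i=1,\dots,m$, $x^{0}_i=\dfrac{\det\left((\mathbf A\mathbf A^{*})_{i.}(\mathbf g)\right)}{\det(\mathbf A\mathbf A^{*})}$. (ii) If $\operatorname{rank}\mathbf A=r\le n<m$, then for all $i=1,\dots,m$, $x^{0}_i=\dfrac{\sum_{\alpha\in I_{r,m}\{i\}}\left|\left((\mathbf A\mathbf A^{*})_{i.}(\mathbf g)\right)^{\alpha}_{\alpha}\right|}{d_r(\mathbf A\mathbf A^{*})}$.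
   Context: $\mathbf A^{+}$ is the Moore–Penrose inverse: the unique $\mathbf X$ with $\mathbf A\mathbf X\mathbf A=\mathbf A$, $\mathbf X\mathbf A\mathbf X=\mathbf X$, $(\mathbf A\mathbf X)^{*}=\mathbf A\mathbf X$, $(\mathbf X\mathbf A)^{*}=\mathbf X\mathbf A$. For a square matrix $\mathbf M$, $\mathbf M_{i.}(\mathbf c)$ is obtained from $\mathbf M$ by replacing its $i$-th row by the row vector $\mathbf c$. $I_{r,m}$ is the set of strictly increasing sequences of $r$ elements of $\{1,\dots,m\}$, $I_{r,m}\{i\}=\{\alpha\in I_{r,m}:i\in\alpha\}$, $\mathbf M^{\alpha}_{\alpha}$ is the principal submatrix indexed by $\alpha$, $|\cdot|$ is the determinant, and $d_r(\mathbf M)=\sum_{\alpha\in I_{r,m}}|\mathbf M^{\alpha}_{\alpha}|$ is the sum of principal minors of order $r$. *)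

theory Defs
  imports "Jordan_Normal_Form.DL_Rank" "Jordan_Normal_Form.DL_Submatrix"
begin

definition cadj :: "complex mat \<Rightarrow> complex mat" where
  "cadj A = mat (dim_col A) (dim_row A) (\<lambda>(i,j). cnj (A $$ (j,i)))"

definition mp_inverse :: "complex mat \<Rightarrow> complex mat" where
  "mp_inverse A = (THE X. X \<in> carrier_mat (dim_col A) (dim_row A) \<and>
      A * X * A = A \<and> X * A * X = X \<and>
      cadj (A * X) = A * X \<and> cadj (X * A) = X * A)"

definition replace_row :: "'a mat \<Rightarrow> nat \<Rightarrow> 'a vec \<Rightarrow> 'a mat" where
  "replace_row M i c = mat (dim_row M) (dim_col M)
     (\<lambda>(k,l). if k = i then c $ l else M $$ (k,l))"

text \<open>I_{r,m}: r-element subsets of the (0-based) index set {0..<m}.\<close>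
definition index_sets :: "nat \<Rightarrow> nat \<Rightarrow> nat set set" where
  "index_sets r m = {\<alpha>. \<alpha> \<subseteq> {..<m} \<and> card \<alpha> = r}"

definition principal_minor :: "'a::comm_ring_1 mat \<Rightarrow> nat set \<Rightarrow> 'a" where
  "principal_minor M \<alpha> = det (submatrix M \<alpha> \<alpha>)"

definition dr :: "nat \<Rightarrow> 'a::comm_ring_1 mat \<Rightarrow> 'a" where
  "dr r M = (\<Sum>\<alpha>\<in>index_sets r (dim_row M). principal_minor M \<alpha>)"

definition crank :: "complex mat \<Rightarrow> nat" where
  "crank A = vec_space.rank (dim_row A) A"

end

theory Submission
  imports Defs
begin

text \<open>
  Let \<open>r\<close> be the rank of \<open>A\<close>, \<open>A = F G\<close> a full-rank factorization and \<open>B = A A\<^sup>*\<close>.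
  The Penrose equations give \<open>A\<^sup>+ B = A\<^sup>*\<close>, so \<open>g = x\<^sup>0 B\<close>, and \<open>A\<^sup>+ = A\<^sup>+ A\<^sup>+\<^sup>* A\<^sup>*\<close>,
  so \<open>x\<^sup>0\<close> lies in the row space of \<open>A\<^sup>* = G\<^sup>* F\<^sup>*\<close>.
  For every scalar \<open>c\<close>, the row \<open>g + c x\<^sup>0 = x\<^sup>0 (B + c I)\<close> replacing row \<open>i\<close> of \<open>B + c I\<close>
  multiplies its determinant by \<open>x\<^sup>0\<^sub>i\<close>. Expanding both sides as polynomials in \<open>c\<close>, whose
  coefficients are sums of principal minors, and comparing the coefficients of \<open>c\<^sup>m\<^sup>-\<^sup>r\<close> gives
  \<open>x\<^sup>0\<^sub>i d\<^sub>r(B) = \<Sum> |(B\<^sub>i\<^sub>.(g))\<^sup>\<alpha>\<^sub>\<alpha>|\<close>: the contribution of the matrix with row \<open>i\<close>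
  replaced by \<open>x\<^sup>0\<close> consists of minors of order \<open>r + 1\<close> of a matrix of rank at most \<open>r\<close>.
  Finally \<open>d\<^sub>r(B) = d\<^sub>r(F (G G\<^sup>* F\<^sup>*)) = det (G G\<^sup>*) det (F\<^sup>* F) \<noteq> 0\<close> by Sylvester's
  identity \<open>c\<^sup>r det (F K + c I) = c\<^sup>m det (K F + c I)\<close>.
\<close>

section \<open>Conjugate transpose and Gram matrices\<close>

lemma cadj_carrier_mat[simp]: "A \<in> carrier_mat m n \<Longrightarrow> cadj A \<in> carrier_mat n m"
  unfolding cadj_def by auto

lemma dim_cadj[simp]: "dim_row (cadj A) = dim_col A" "dim_col (cadj A) = dim_row A"
  unfolding cadj_def by auto

lemma index_cadj[simp]: "i < dim_col A \<Longrightarrow> j < dim_row A \<Longrightarrow> cadj A $$ (i,j) = cnj (A $$ (j,i))"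
  unfolding cadj_def by auto

lemma cadj_cadj[simp]: "cadj (cadj A) = A"
  by (rule eq_matI) auto

lemma cadj_one_mat[simp]: "cadj (1\<^sub>m n) = 1\<^sub>m n"
  by (rule eq_matI) auto

lemma cadj_mult: "dim_col A = dim_row B \<Longrightarrow> cadj (A * B) = cadj B * cadj A"
  by (rule eq_matI) (auto simp: scalar_prod_def intro!: sum.cong)

lemma mult_mat_assoc:
  fixes A :: "'a::semiring_1 mat"
  shows "dim_col A = dim_row B \<Longrightarrow> dim_col B = dim_row C \<Longrightarrow> A * B * C = A * (B * C)"
  by (rule assoc_mult_mat[of A "dim_row A" "dim_col A" B "dim_col B" C "dim_col C"]) auto

lemma one_mult_mat: fixes A :: "'a::semiring_1 mat" shows "dim_row A = n \<Longrightarrow> 1\<^sub>m n * A = A"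
  by (rule left_mult_one_mat[of A n "dim_col A"]) auto

lemma cadj_mult_self_mult_vec_eq_0:
  fixes C :: "complex mat"
  assumes C: "C \<in> carrier_mat p q" and v: "v \<in> carrier_vec q"
    and z: "cadj C * C *\<^sub>v v = 0\<^sub>v q"
  shows "C *\<^sub>v v = 0\<^sub>v p"
proof -
  define w where "w = C *\<^sub>v v"
  have w: "w \<in> carrier_vec p" unfolding w_def using C v by simp
  have "cadj C * C *\<^sub>v v = cadj C *\<^sub>v w" unfolding w_def
    by (rule assoc_mult_mat_vec[OF cadj_carrier_mat[OF C] C v])
  hence z': "cadj C *\<^sub>v w = 0\<^sub>v q" using z by simp
  \<comment> \<open>\<open>\<parallel>C v\<parallel>\<^sup>2 = v\<^sup>* (C\<^sup>* C v) = 0\<close>\<close>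
  have "(\<Sum>k<p. cnj (w $ k) * w $ k) = (\<Sum>k<p. \<Sum>j<q. cnj (v $ j) * (cnj (C $$ (k,j)) * w $ k))"
    unfolding w_def using C v
    by (auto simp: scalar_prod_def sum_distrib_left sum_distrib_right algebra_simps intro!: sum.cong)
  also have "\<dots> = (\<Sum>j<q. cnj (v $ j) * (cadj C *\<^sub>v w) $ j)"
    using C w by (subst sum.swap) (auto simp: scalar_prod_def sum_distrib_left intro!: sum.cong)
  also have "\<dots> = 0" using z' by simp
  finally have "(\<Sum>k<p. cnj (w $ k) * w $ k) = 0" .
  moreover have "(\<Sum>k<p. cnj (w $ k) * w $ k) = of_real (\<Sum>k<p. (cmod (w $ k))\<^sup>2)"
    unfolding of_real_sum by (metis complex_norm_square mult.commute)
  ultimately have "(\<Sum>k<p. (cmod (w $ k))\<^sup>2) = 0"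
    by (metis of_real_eq_0_iff)
  hence "\<forall>k<p. w $ k = 0" by (subst (asm) sum_nonneg_eq_0_iff) auto
  thus ?thesis using w unfolding w_def[symmetric] by (intro eq_vecI) auto
qed

lemma det_gram_nonzero:
  fixes C :: "complex mat"
  assumes C: "C \<in> carrier_mat p q"
    and inj: "\<And>v. v \<in> carrier_vec q \<Longrightarrow> C *\<^sub>v v = 0\<^sub>v p \<Longrightarrow> v = 0\<^sub>v q"
  shows "det (cadj C * C) \<noteq> 0"
proof
  assume "det (cadj C * C) = 0"
  moreover have "cadj C * C \<in> carrier_mat q q" using C by auto
  ultimately have "\<exists>v. v \<in> carrier_vec q \<and> v \<noteq> 0\<^sub>v q \<and> cadj C * C *\<^sub>v v = 0\<^sub>v q"
    using det_0_iff_vec_prod_zero_field by blast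
  then obtain v where "v \<in> carrier_vec q" "v \<noteq> 0\<^sub>v q" "cadj C * C *\<^sub>v v = 0\<^sub>v q"
    by blast
  thus False using cadj_mult_self_mult_vec_eq_0[OF C] inj by blast
qed

lemma hermitian_inverse_exists:
  fixes M :: "complex mat"
  assumes M: "M \<in> carrier_mat n n" and d: "det M \<noteq> 0" and h: "cadj M = M"
  obtains N where "N \<in> carrier_mat n n" "M * N = 1\<^sub>m n" "N * M = 1\<^sub>m n" "cadj N = N"
proof -
  obtain N where N: "N \<in> carrier_mat n n" "M * N = 1\<^sub>m n" "N * M = 1\<^sub>m n"
    using det_non_zero_imp_unit[OF M d] unfolding Units_def ring_mat_def by auto
  have MN: "M * cadj N = 1\<^sub>m n"
    using cadj_mult[of N M] N M h by (metis carrier_matD cadj_one_mat)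
  have "cadj N = (N * M) * cadj N" using N by simp
  also have "\<dots> = N * (M * cadj N)" by (rule assoc_mult_mat[OF N(1) M cadj_carrier_mat[OF N(1)]])
  also have "\<dots> = N" using MN N by simp
  finally show ?thesis using N that by blast
qed

section \<open>Full-rank factorization\<close>

lemma (in vec_space) maximal_indpt_cols_exist:
  assumes A: "A \<in> carrier_mat n nc"
  obtains S where "S \<subseteq> set (cols A)" "lin_indpt S" "finite S" "card S = rank A"
    "\<And>c. c \<in> set (cols A) \<Longrightarrow> c \<in> span S"
proof -
  have colsA: "set (cols A) \<subseteq> carrier_vec n" using A cols_dim by blast
  have "{} \<subseteq> set (cols A) \<and> lin_indpt {}"
    by (metis empty_subsetI fin_dim finite_basis_exists subset_li_is_li vec_vs vectorspace.basis_def)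
  then obtain S where max: "maximal S (\<lambda>T. T \<subseteq> set (cols A) \<and> lin_indpt T)" and finS: "finite S"
    using maximal_exists_superset[of "set (cols A)" "\<lambda>T. T \<subseteq> set (cols A) \<and> lin_indpt T" "{}"]
    by blast
  have SA: "S \<subseteq> set (cols A)" and liS: "lin_indpt S" using max unfolding maximal_def by auto
  have Sc: "S \<subseteq> carrier_vec n" using SA colsA by auto
  have "c \<in> span S" if c: "c \<in> set (cols A)" for c
  proof (rule ccontr)
    assume ns: "c \<notin> span S"
    have "c \<notin> S" using ns in_own_span[OF Sc] by auto
    hence "lin_indpt (S \<union> {c})" using lin_dep_iff_in_span[OF Sc liS] ns c colsA by auto
    hence "S \<union> {c} = S" using max c SA unfolding maximal_def by blast
    thus False using \<open>c \<notin> S\<close> by auto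
  qed
  thus ?thesis using that SA liS finS rank_card_indpt[OF A max] by metis
qed

lemma (in vec_space) span_mat_of_cols_mult_vec:
  assumes "set xs \<subseteq> carrier_vec n" and "c \<in> span (set xs)"
  shows "\<exists>v \<in> carrier_vec (length xs). c = mat_of_cols n xs *\<^sub>v v"
proof -
  obtain f where "c = lincomb_list f xs"
    using assms span_list_as_span[of xs] unfolding span_list_def by auto
  moreover have "lincomb_list f xs = mat_of_cols n xs *\<^sub>v vec (length xs) f"
    by (rule lincomb_list_as_mat_mult) (use assms in auto)
  ultimately show ?thesis by auto
qed

lemma mult_mat_vec_cancel:
  fixes F :: "'a::comm_ring_1 mat"
  assumes F: "F \<in> carrier_mat m r"
    and inj: "\<And>v. v \<in> carrier_vec r \<Longrightarrow> F *\<^sub>v v = 0\<^sub>v m \<Longrightarrow> v = 0\<^sub>v r"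
    and u: "u \<in> carrier_vec r" and w: "w \<in> carrier_vec r" and eq: "F *\<^sub>v u = F *\<^sub>v w"
  shows "u = w"
proof -
  have "F *\<^sub>v (u - w) = F *\<^sub>v u - F *\<^sub>v w" by (rule mult_minus_distrib_mat_vec[OF F u w])
  hence "F *\<^sub>v (u - w) = 0\<^sub>v m" unfolding eq using F w by simp
  hence uw: "u - w = 0\<^sub>v r" by (rule inj[rotated]) (use u w in simp)
  show ?thesis
  proof (rule eq_vecI)
    fix i assume i: "i < dim_vec w"
    hence "(u - w) $ i = 0" using uw w by simp
    thus "u $ i = w $ i" using i u w by simp
  qed (use u w in simp)
qed

lemma mat_factor_through_cols:
  fixes A F :: "'a::comm_ring_1 mat"
  assumes A: "A \<in> carrier_mat m n" and F: "F \<in> carrier_mat m r"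
    and cols: "\<And>j. j < n \<Longrightarrow> \<exists>v \<in> carrier_vec r. col A j = F *\<^sub>v v"
  obtains G where "G \<in> carrier_mat r n" "A = F * G"
proof -
  define v where "v = (\<lambda>j. SOME v. v \<in> carrier_vec r \<and> col A j = F *\<^sub>v v)"
  have v: "v j \<in> carrier_vec r" "col A j = F *\<^sub>v v j" if "j < n" for j
    using someI_ex[OF cols[OF that, unfolded Bex_def]] unfolding v_def by auto
  define G where "G = mat r n (\<lambda>(i,j). v j $ i)"
  have G: "G \<in> carrier_mat r n" unfolding G_def by simp
  have "col G j = v j" if "j < n" for j
    using v(1)[OF that] that unfolding G_def by (intro eq_vecI) auto
  hence "col (F * G) j = col A j" if "j < n" for j
    using col_mult2[OF F G that] v(2)[OF that] that by metis
  hence "A = F * G"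
  proof (intro eq_matI)
    fix i j assume "i < dim_row (F * G)" "j < dim_col (F * G)"
    hence "i < m" "j < n" using F G by auto
    thus "A $$ (i, j) = (F * G) $$ (i, j)"
      using \<open>\<And>j. j < n \<Longrightarrow> col (F * G) j = col A j\<close>[of j] A F G
      by (metis carrier_matD index_col index_mult_mat(2,3))
  qed (use A F G in auto)
  thus ?thesis using that G by blast
qed

lemma cadj_mult_vec_eq_0_if_unit_cols:
  fixes G :: "complex mat"
  assumes G: "G \<in> carrier_mat r n" and unit: "\<And>k. k < r \<Longrightarrow> \<exists>j<n. col G j = unit_vec r k"
    and w: "w \<in> carrier_vec r" and z: "cadj G *\<^sub>v w = 0\<^sub>v n"
  shows "w = 0\<^sub>v r"
proof (rule eq_vecI)
  fix k assume "k < dim_vec (0\<^sub>v r)"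
  hence k: "k < r" by simp
  obtain j where j: "j < n" "col G j = unit_vec r k" using unit[OF k] by auto
  have "G $$ (i, j) = (if i = k then 1 else 0)" if "i < r" for i
    using j G that k by (metis carrier_matD index_col index_unit_vec(1))
  have "(cadj G *\<^sub>v w) $ j = (\<Sum>i<r. cnj (G $$ (i, j)) * w $ i)"
    using G w j by (simp add: scalar_prod_def lessThan_atLeast0)
  also have "\<dots> = (\<Sum>i<r. if i = k then w $ i else 0)"
    using \<open>\<And>i. i < r \<Longrightarrow> G $$ (i, j) = _\<close> by (intro sum.cong) auto
  also have "\<dots> = w $ k" using k by simp
  finally show "w $ k = 0\<^sub>v r $ k" using z j k by simp
qed (use w in auto)

lemma full_rank_factorization:
  fixes A :: "complex mat"
  assumes A: "A \<in> carrier_mat m n"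
  obtains F G where "F \<in> carrier_mat m (crank A)" "G \<in> carrier_mat (crank A) n" "A = F * G"
    "det (cadj F * F) \<noteq> 0" "det (G * cadj G) \<noteq> 0" "crank A \<le> m"
proof -
  interpret V: vec_space "TYPE(complex)" m .
  obtain S where SA: "S \<subseteq> set (cols A)" and liS: "V.lin_indpt S" and finS: "finite S"
    and rS: "card S = crank A" and span: "\<And>c. c \<in> set (cols A) \<Longrightarrow> c \<in> V.span S"
    using V.maximal_indpt_cols_exist[OF A] A unfolding crank_def by auto
  define r where "r = crank A"
  have Sc: "S \<subseteq> carrier_vec m" using SA A cols_dim by blast
  obtain xs where xs: "set xs = S" "distinct xs" using finite_distinct_list[OF finS] by blast
  have lxs: "length xs = r" unfolding r_def using xs rS distinct_card by fastforce
  define F where "F = mat_of_cols m xs"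
  have F: "F \<in> carrier_mat m r" unfolding F_def using lxs by auto
  have colsF: "cols F = xs" unfolding F_def using xs Sc by (intro cols_mat_of_cols) auto
  have Finj: "v = 0\<^sub>v r" if v: "v \<in> carrier_vec r" and Fv: "F *\<^sub>v v = 0\<^sub>v m" for v
  proof (rule ccontr)
    assume "v \<noteq> 0\<^sub>v r"
    from V.lin_depI[OF F v this Fv] colsF xs liS show False by simp
  qed
  have "\<exists>v \<in> carrier_vec r. col A j = F *\<^sub>v v" if "j < n" for j
  proof -
    have "col A j \<in> set (cols A)" using that A by (simp add: cols_def)
    hence "col A j \<in> V.span (set xs)" using span xs by simp
    from V.span_mat_of_cols_mult_vec[OF _ this] Sc xs lxs show ?thesis unfolding F_def by simp
  qed
  then obtain G where G: "G \<in> carrier_mat r n" and AFG: "A = F * G"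
    using mat_factor_through_cols[OF A F] by blast
  \<comment> \<open>the columns of \<open>F\<close> are columns of \<open>A = F G\<close>, so \<open>G\<close> contains every unit column\<close>
  have "\<exists>j<n. col G j = unit_vec r k" if k: "k < r" for k
  proof -
    have "xs ! k \<in> set (cols A)" using k lxs xs SA nth_mem by blast
    then obtain j where j: "j < n" "col A j = xs ! k"
      using A by (auto simp: cols_def)
    have "F *\<^sub>v unit_vec r k = col F k"
      using F k by (intro eq_vecI) (auto simp: scalar_prod_right_unit)
    also have "\<dots> = col A j" using j k F colsF lxs by (metis carrier_matD(2) cols_nth)
    also have "\<dots> = F *\<^sub>v col G j" unfolding AFG by (rule col_mult2[OF F G j(1)])
    finally have "unit_vec r k = col G j"
      using mult_mat_vec_cancel[OF F Finj unit_vec_carrier col_carrier_vec[OF j(1) G]] by blast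
    thus ?thesis using j by auto
  qed
  hence "det (cadj (cadj G) * cadj G) \<noteq> 0"
    using G by (intro det_gram_nonzero[of _ n r]) (auto intro: cadj_mult_vec_eq_0_if_unit_cols)
  moreover have "det (cadj F * F) \<noteq> 0" using det_gram_nonzero[OF F] Finj by blast
  moreover have "r \<le> m"
    using V.li_le_dim(2)[OF V.fin_dim Sc liS] V.dim_is_n rS unfolding r_def by simp
  ultimately show ?thesis using that F G AFG unfolding r_def by simp
qed

section \<open>The Moore--Penrose inverse\<close>

definition penrose :: "complex mat \<Rightarrow> complex mat \<Rightarrow> bool" where
  "penrose A X \<longleftrightarrow> X \<in> carrier_mat (dim_col A) (dim_row A) \<and>
      A * X * A = A \<and> X * A * X = X \<and> cadj (A * X) = A * X \<and> cadj (X * A) = X * A"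

lemma penrose_mult_gram:
  assumes "penrose A X" shows "X * (A * cadj A) = cadj A"
proof -
  have d: "dim_row X = dim_col A" "dim_col X = dim_row A" using assms unfolding penrose_def by auto
  have "X * (A * cadj A) = cadj (X * A) * cadj A"
    using assms d unfolding penrose_def by (simp add: mult_mat_assoc)
  also have "\<dots> = cadj (A * X * A)" using d by (simp add: cadj_mult mult_mat_assoc)
  finally show ?thesis using assms unfolding penrose_def by simp
qed

lemma penrose_eq_mult_cadj:
  assumes "penrose A X" shows "X = X * cadj X * cadj A"
proof -
  have d: "dim_row X = dim_col A" "dim_col X = dim_row A" using assms unfolding penrose_def by auto
  have "X = X * (A * X)" using assms d unfolding penrose_def by (simp add: mult_mat_assoc)
  also have "\<dots> = X * cadj (A * X)" using assms unfolding penrose_def by simp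
  finally show ?thesis using d by (simp add: cadj_mult mult_mat_assoc)
qed

lemma penrose_unique:
  assumes A: "A \<in> carrier_mat m n" and X: "penrose A X" and Y: "penrose A Y"
  shows "X = Y"
proof -
  from X A have Xc: "X \<in> carrier_mat n m" unfolding penrose_def by auto
  from Y A have Yc: "Y \<in> carrier_mat n m" and Y1: "A * Y * A = A" and Y2: "Y * A * Y = Y"
    and Y3: "cadj (A * Y) = A * Y" and Y4: "cadj (Y * A) = Y * A" unfolding penrose_def by auto
  note d = carrier_matD[OF A] carrier_matD[OF Xc] carrier_matD[OF Yc]
  have "X = X * cadj X * cadj A" by (rule penrose_eq_mult_cadj[OF X])
  also have "\<dots> = X * (cadj X * cadj A)" using d by (simp add: mult_mat_assoc)
  finally have h1: "X = X * (cadj X * cadj A)" .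
  have h2: "cadj A = cadj A * (A * Y)"
    using Y1 Y3 d by (metis cadj_mult index_mult_mat(2,3))
  have h3: "Y = cadj A * (cadj Y * Y)"
  proof -
    have "Y = cadj (Y * A) * Y" using Y2 Y4 by simp
    also have "\<dots> = cadj A * (cadj Y * Y)" using d by (simp add: cadj_mult mult_mat_assoc)
    finally show ?thesis .
  qed
  have h4: "cadj A = X * (A * cadj A)" using penrose_mult_gram[OF X] by simp
  have "X = X * (cadj X * (cadj A * (A * Y)))" using h1 h2 by simp
  also have "\<dots> = (X * (cadj X * cadj A)) * (A * Y)" using d by (simp add: mult_mat_assoc)
  also have "\<dots> = X * (A * Y)" using h1 by simp
  also have "\<dots> = X * (A * (cadj A * (cadj Y * Y)))" using h3 by simp
  also have "\<dots> = X * (A * cadj A) * (cadj Y * Y)" using d by (simp add: mult_mat_assoc)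
  also have "\<dots> = Y" using h3 h4 by simp
  finally show ?thesis .
qed

text \<open>The Moore--Penrose inverse of \<open>A = F G\<close> is \<open>G\<^sup>* (G G\<^sup>*)\<^sup>-\<^sup>1 (F\<^sup>* F)\<^sup>-\<^sup>1 F\<^sup>*\<close>.\<close>

lemma penrose_exists_full_rank_factorization:
  fixes A F G :: "complex mat"
  assumes A: "A \<in> carrier_mat m n" and F: "F \<in> carrier_mat m r" and G: "G \<in> carrier_mat r n"
    and AFG: "A = F * G" and dF: "det (cadj F * F) \<noteq> 0" and dG: "det (G * cadj G) \<noteq> 0"
  shows "\<exists>X. penrose A X"
proof -
  note d = carrier_matD[OF A] carrier_matD[OF F] carrier_matD[OF G]
  have GG: "G * cadj G \<in> carrier_mat r r" "cadj (G * cadj G) = G * cadj G"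
    using G by (auto simp: cadj_mult)
  have FF: "cadj F * F \<in> carrier_mat r r" "cadj (cadj F * F) = cadj F * F"
    using F by (auto simp: cadj_mult)
  obtain P where P: "P \<in> carrier_mat r r" "G * cadj G * P = 1\<^sub>m r" "P * (G * cadj G) = 1\<^sub>m r"
    "cadj P = P"
    using hermitian_inverse_exists[OF GG(1) dG GG(2)] by blast
  obtain Q where Q: "Q \<in> carrier_mat r r" "cadj F * F * Q = 1\<^sub>m r" "Q * (cadj F * F) = 1\<^sub>m r"
    "cadj Q = Q"
    using hermitian_inverse_exists[OF FF(1) dF FF(2)] by blast
  note d = d carrier_matD[OF P(1)] carrier_matD[OF Q(1)]
  define X where "X = cadj G * (P * (Q * cadj F))"
  have P2: "G * (cadj G * (P * Z)) = Z" if "dim_row Z = r" for Z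
  proof -
    have "G * (cadj G * (P * Z)) = (G * cadj G * P) * Z" using d that by (simp add: mult_mat_assoc)
    thus ?thesis using P that by (simp add: one_mult_mat)
  qed
  have Q2: "Q * (cadj F * (F * Z)) = Z" if "dim_row Z = r" for Z
  proof -
    have "Q * (cadj F * (F * Z)) = (Q * (cadj F * F)) * Z" using d that by (simp add: mult_mat_assoc)
    thus ?thesis using Q that by (simp add: one_mult_mat)
  qed
  have AX: "A * X = F * (Q * cadj F)"
    unfolding AFG X_def using d by (simp add: mult_mat_assoc P2)
  have XA: "X * A = cadj G * (P * G)"
    unfolding AFG X_def using d by (simp add: mult_mat_assoc Q2)
  have "penrose A X"
    unfolding penrose_def
  proof (intro conjI)
    show "X \<in> carrier_mat (dim_col A) (dim_row A)" unfolding X_def using d by auto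
    show "A * X * A = A" unfolding AX using d by (simp add: AFG mult_mat_assoc Q2)
    show "X * A * X = X" unfolding XA using d by (simp add: X_def mult_mat_assoc P2)
    show "cadj (A * X) = A * X" unfolding AX using d Q(4) by (simp add: cadj_mult mult_mat_assoc)
    show "cadj (X * A) = X * A" unfolding XA using d P(4) by (simp add: cadj_mult mult_mat_assoc)
  qed
  thus ?thesis ..
qed

lemma penrose_mp_inverse:
  assumes A: "A \<in> carrier_mat m n"
  shows "penrose A (mp_inverse A)"
proof -
  obtain F G where "F \<in> carrier_mat m (crank A)" "G \<in> carrier_mat (crank A) n" "A = F * G"
    "det (cadj F * F) \<noteq> 0" "det (G * cadj G) \<noteq> 0"
    using full_rank_factorization[OF A] by metis
  then obtain X where "penrose A X" using penrose_exists_full_rank_factorization[OF A] by blast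
  hence "penrose A (THE X. penrose A X)"
    by (rule theI) (use penrose_unique[OF A] \<open>penrose A X\<close> in blast)
  thus ?thesis unfolding mp_inverse_def penrose_def .
qed

section \<open>Row replacement\<close>

lemma replace_row_carrier_mat[simp]: "M \<in> carrier_mat n n \<Longrightarrow> replace_row M i w \<in> carrier_mat n n"
  unfolding replace_row_def by auto

lemma index_replace_row[simp]:
  "k < dim_row M \<Longrightarrow> l < dim_col M \<Longrightarrow>
     replace_row M i w $$ (k,l) = (if k = i then w $ l else M $$ (k,l))"
  "dim_row (replace_row M i w) = dim_row M" "dim_col (replace_row M i w) = dim_col M"
  unfolding replace_row_def by auto

lemma replace_row_self:
  assumes "M \<in> carrier_mat n n" shows "replace_row M i (row M i) = M"
  by (rule eq_matI) (use assms in \<open>auto simp: replace_row_def\<close>)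

lemma det_replace_row:
  fixes M :: "'a::comm_ring_1 mat"
  assumes M: "M \<in> carrier_mat n n" and i: "i < n" and w: "w \<in> carrier_vec n"
  shows "det (replace_row M i w) = (\<Sum>j<n. w $ j * cofactor M i j)"
proof -
  have "det (replace_row M i w) =
      (\<Sum>j<n. replace_row M i w $$ (i,j) * cofactor (replace_row M i w) i j)"
    by (rule laplace_expansion_row[OF replace_row_carrier_mat[OF M] i])
  also have "\<dots> = (\<Sum>j<n. w $ j * cofactor M i j)"
  proof (rule sum.cong)
    fix j
    have "mat_delete (replace_row M i w) i j = mat_delete M i j"
      by (rule eq_matI) (use M in \<open>auto simp: mat_delete_def replace_row_def\<close>)
    thus "replace_row M i w $$ (i, j) * cofactor (replace_row M i w) i j = w $ j * cofactor M i j"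
      if "j \<in> {..<n}" using M i that by (simp add: cofactor_def)
  qed simp
  finally show ?thesis .
qed

lemma det_replace_row_add_smult:
  fixes M :: "'a::comm_ring_1 mat"
  assumes M: "M \<in> carrier_mat n n" and i: "i < n" and a: "a \<in> carrier_vec n" and b: "b \<in> carrier_vec n"
  shows "det (replace_row M i (a + c \<cdot>\<^sub>v b)) = det (replace_row M i a) + c * det (replace_row M i b)"
proof -
  have ab: "a + c \<cdot>\<^sub>v b \<in> carrier_vec n" using a b by simp
  show ?thesis using a b
    unfolding det_replace_row[OF M i ab] det_replace_row[OF M i a] det_replace_row[OF M i b]
    by (simp add: sum.distrib sum_distrib_left algebra_simps)
qed

lemma det_replace_row_row:
  fixes M :: "'a::comm_ring_1 mat"
  assumes M: "M \<in> carrier_mat n n" and i: "i < n" and k: "k < n"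
  shows "det (replace_row M i (row M k)) = (if k = i then det M else 0)"
proof (cases "k = i")
  case True thus ?thesis using replace_row_self[OF M] by simp
next
  case False
  have "row (replace_row M i (row M k)) i = row (replace_row M i (row M k)) k"
    by (rule eq_vecI) (use M i k False in \<open>auto simp: replace_row_def\<close>)
  hence "det (replace_row M i (row M k)) = 0"
    using det_identical_rows[OF replace_row_carrier_mat[OF M] _ i k] False by blast
  thus ?thesis using False by simp
qed

lemma det_replace_row_transpose_mult:
  fixes M :: "'a::comm_ring_1 mat"
  assumes M: "M \<in> carrier_mat n n" and i: "i < n" and x: "x \<in> carrier_vec n"
  shows "det (replace_row M i (transpose_mat M *\<^sub>v x)) = x $ i * det M"
proof -
  have "det (replace_row M i (transpose_mat M *\<^sub>v x)) =
      (\<Sum>j<n. (\<Sum>k<n. x $ k * M $$ (k,j)) * cofactor M i j)"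
    using M x by (subst det_replace_row[OF M i])
      (auto simp: scalar_prod_def lessThan_atLeast0 mult.commute intro!: sum.cong)
  also have "\<dots> = (\<Sum>k<n. \<Sum>j<n. x $ k * (M $$ (k,j) * cofactor M i j))"
    by (subst sum.swap) (simp add: sum_distrib_right mult.assoc)
  also have "\<dots> = (\<Sum>k<n. x $ k * (\<Sum>j<n. row M k $ j * cofactor M i j))"
    using M by (auto simp: sum_distrib_left intro!: sum.cong)
  also have "\<dots> = (\<Sum>k<n. x $ k * det (replace_row M i (row M k)))"
    using M i by (intro sum.cong) (auto simp: det_replace_row)
  also have "\<dots> = x $ i * det M"
    using M i by (simp add: det_replace_row_row if_distrib cong: if_cong)
  finally show ?thesis .
qed

section \<open>Principal minors\<close>

lemma pick_lessThan: "i < n \<Longrightarrow> pick {..<n} i = i"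
proof -
  assume i: "i < n"
  have "{a \<in> {..<n}. a < i} = {..<i}" using i by auto
  thus ?thesis using pick_card_in_set[of i "{..<n}"] i by simp
qed

lemma pick_image_strict_mono:
  assumes f: "strict_mono (f :: nat \<Rightarrow> nat)" and a: "a < card S"
  shows "pick (f ` S) a = f (pick S a)"
proof -
  define x where "x = pick S a"
  have xS: "x \<in> S" unfolding x_def by (rule pick_in_set_le[OF a])
  have "{b \<in> f ` S. b < f x} = f ` {c \<in> S. c < x}"
    using strict_mono_less[OF f] by auto
  hence "card {b \<in> f ` S. b < f x} = card {c \<in> S. c < x}"
    using card_image[OF strict_mono_imp_inj_on[OF f]] by simp
  also have "\<dots> = a" unfolding x_def by (rule card_pick_le[OF a])
  finally show ?thesis
    using pick_card_in_set[of "f x" "f ` S"] xS unfolding x_def by simp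
qed

lemma strict_mono_insert_index: "strict_mono (insert_index t)"
  by (rule strict_monoI) (auto simp: insert_index_def)

lemma card_lessThan_Int: "S \<subseteq> {..<n} \<Longrightarrow> card {i. i < n \<and> i \<in> S} = card S"
  by (metis (no_types, lifting) Collect_cong lessThan_iff subsetD Collect_mem_eq)

lemma submatrix_lessThan:
  assumes "M \<in> carrier_mat n n" shows "submatrix M {..<n} {..<n} = M"
  by (rule eq_matI) (use assms card_lessThan_Int[of "{..<n}" n] in \<open>auto simp: submatrix_def pick_lessThan\<close>)

lemma principal_minor_lessThan: "M \<in> carrier_mat n n \<Longrightarrow> principal_minor M {..<n} = det M"
  unfolding principal_minor_def by (simp add: submatrix_lessThan)

lemma submatrix_mat_delete:
  fixes M :: "'a mat"
  assumes M: "M \<in> carrier_mat (Suc n) (Suc n)" and S: "S \<subseteq> {..<Suc n}" and t: "t < Suc n" "t \<notin> S"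
  defines "S' \<equiv> {k. k < n \<and> insert_index t k \<in> S}"
  shows "submatrix M S S = submatrix (mat_delete M t t) S' S'" and "card S' = card S"
proof -
  have S'n: "S' \<subseteq> {..<n}" unfolding S'_def by auto
  have SS': "S = insert_index t ` S'"
  proof
    show "insert_index t ` S' \<subseteq> S" unfolding S'_def by auto
    show "S \<subseteq> insert_index t ` S'"
    proof
      fix s assume s: "s \<in> S"
      hence "s < Suc n" "s \<noteq> t" using S t by auto
      hence "insert_index t (delete_index t s) = s" "delete_index t s < n"
        using t by (auto simp: insert_index_def delete_index_def)
      thus "s \<in> insert_index t ` S'" unfolding S'_def using s by (metis (mono_tags) image_eqI mem_Collect_eq)
    qed
  qed
  show cardS: "card S' = card S"
    unfolding SS' by (rule card_image[symmetric]) (rule strict_mono_imp_inj_on[OF strict_mono_insert_index])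
  have Md: "mat_delete M t t \<in> carrier_mat n n" using mat_delete_carrier[OF M] by simp
  have c1: "card {i. i < Suc n \<and> i \<in> S} = card S" and c2: "card {i. i < n \<and> i \<in> S'} = card S'"
    using S S'n by (simp_all add: card_lessThan_Int)
  show "submatrix M S S = submatrix (mat_delete M t t) S' S'"
  proof (rule eq_matI)
    fix a b assume "a < dim_row (submatrix (mat_delete M t t) S' S')"
      and "b < dim_col (submatrix (mat_delete M t t) S' S')"
    hence a: "a < card S'" and b: "b < card S'" using Md c2 by (auto simp: dim_submatrix)
    have "pick S' a < n" "pick S' b < n" using pick_in_set_le[OF a] pick_in_set_le[OF b] S'n by auto
    hence "submatrix (mat_delete M t t) S' S' $$ (a,b) =
        M $$ (insert_index t (pick S' a), insert_index t (pick S' b))"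
      using Md M c2 a b by (simp add: submatrix_index mat_delete_def insert_index_def)
    also have "\<dots> = M $$ (pick S a, pick S b)"
      unfolding SS' using pick_image_strict_mono[OF strict_mono_insert_index] a b by simp
    also have "\<dots> = submatrix M S S $$ (a,b)"
      by (rule submatrix_index[symmetric]) (use M c1 cardS a b in auto)
    finally show "submatrix M S S $$ (a, b) = submatrix (mat_delete M t t) S' S' $$ (a, b)" by simp
  qed (use M Md c1 c2 cardS in \<open>simp_all add: dim_submatrix\<close>)
qed

definition keep_rows :: "'a::comm_ring_1 mat \<Rightarrow> nat set \<Rightarrow> 'a mat" where
  "keep_rows M S = mat (dim_row M) (dim_row M)
     (\<lambda>(k,l). if k \<in> S then M $$ (k,l) else if k = l then 1 else 0)"

lemma keep_rows_lessThan: "M \<in> carrier_mat n n \<Longrightarrow> keep_rows M {..<n} = M"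
  by (rule eq_matI) (auto simp: keep_rows_def)

lemma det_keep_rows:
  fixes M :: "'a::comm_ring_1 mat"
  assumes "M \<in> carrier_mat n n" and "S \<subseteq> {..<n}"
  shows "det (keep_rows M S) = principal_minor M S"
  using assms
proof (induction n arbitrary: M S)
  case 0
  hence "submatrix M S S \<in> carrier_mat 0 0" "keep_rows M S \<in> carrier_mat 0 0"
    by (auto simp: submatrix_def keep_rows_def)
  thus ?case unfolding principal_minor_def by simp
next
  case (Suc n)
  note M = Suc.prems(1) and S = Suc.prems(2)
  show ?case
  proof (cases "S = {..<Suc n}")
    case True
    thus ?thesis using M by (simp add: keep_rows_lessThan principal_minor_lessThan)
  next
    case False
    then obtain t where t: "t < Suc n" "t \<notin> S" using S by auto
    define S' where "S' = {k. k < n \<and> insert_index t k \<in> S}"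
    have KS: "keep_rows M S \<in> carrier_mat (Suc n) (Suc n)" using M by (auto simp: keep_rows_def)
    \<comment> \<open>row \<open>t\<close> of \<open>keep_rows M S\<close> is a unit row\<close>
    have "det (keep_rows M S) = (\<Sum>j<Suc n. keep_rows M S $$ (t,j) * cofactor (keep_rows M S) t j)"
      by (rule laplace_expansion_row[OF KS t(1)])
    also have "\<dots> = (\<Sum>j<Suc n. if j = t then cofactor (keep_rows M S) t t else 0)"
      by (rule sum.cong) (use M t in \<open>auto simp: keep_rows_def\<close>)
    also have "\<dots> = cofactor (keep_rows M S) t t" using t by simp
    also have "\<dots> = det (mat_delete (keep_rows M S) t t)"
      unfolding cofactor_def by (simp add: mult_2[symmetric])
    also have "mat_delete (keep_rows M S) t t = keep_rows (mat_delete M t t) S'"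
      by (rule eq_matI) (use M t in \<open>auto simp: keep_rows_def mat_delete_def S'_def insert_index_def\<close>)
    also have "det \<dots> = principal_minor (mat_delete M t t) S'"
      by (rule Suc.IH) (use M in \<open>auto simp: S'_def\<close>)
    also have "\<dots> = principal_minor M S"
      unfolding principal_minor_def S'_def using submatrix_mat_delete(1)[OF M S t] by simp
    finally show ?thesis .
  qed
qed

definition diag_indicator :: "nat \<Rightarrow> nat set \<Rightarrow> 'a::comm_ring_1 mat" where
  "diag_indicator n T = mat n n (\<lambda>(k,l). if k = l \<and> k \<in> T then 1 else 0)"

lemma diag_indicator_carrier_mat[simp]: "diag_indicator n T \<in> carrier_mat n n"
  unfolding diag_indicator_def by auto

lemma diag_indicator_lessThan: "diag_indicator n {..<n} = 1\<^sub>m n"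
  by (rule eq_matI) (auto simp: diag_indicator_def)

lemma sum_Pow_insert_power:
  fixes f :: "'b set \<Rightarrow> 'a::comm_semiring_1"
  assumes T: "finite T" and t: "t \<notin> T"
  shows "(\<Sum>U\<in>Pow (insert t T). c ^ card U * f U) =
    (\<Sum>U\<in>Pow T. c ^ card U * f U) + c * (\<Sum>U\<in>Pow T. c ^ card U * f (insert t U))"
proof -
  have inj: "inj_on (insert t) (Pow T)"
    by (rule inj_onI) (metis PowD t insert_ident subsetD)
  have card: "card (insert t U) = Suc (card U)" if "U \<in> Pow T" for U
    using that T t finite_subset by (metis PowD card_insert_disjoint subsetD)
  have "(\<Sum>U\<in>Pow (insert t T). c ^ card U * f U) =
      (\<Sum>U\<in>Pow T. c ^ card U * f U) + (\<Sum>U\<in>insert t ` Pow T. c ^ card U * f U)"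
    unfolding Pow_insert by (rule sum.union_disjoint) (use T t in auto)
  also have "(\<Sum>U\<in>insert t ` Pow T. c ^ card U * f U) =
      (\<Sum>U\<in>Pow T. c ^ card (insert t U) * f (insert t U))"
    by (simp add: sum.reindex[OF inj])
  also have "\<dots> = c * (\<Sum>U\<in>Pow T. c ^ card U * f (insert t U))"
    by (auto simp: card sum_distrib_left mult.assoc intro!: sum.cong)
  finally show ?thesis .
qed

lemma det_add_smult_diag_indicator_keep_rows:
  fixes M :: "'a::comm_ring_1 mat"
  assumes "finite T" "M \<in> carrier_mat n n" "T \<subseteq> {..<n}"
  shows "det (M + c \<cdot>\<^sub>m diag_indicator n T) =
    (\<Sum>U\<in>Pow T. c ^ card U * det (keep_rows M ({..<n} - U)))"
  using assms
proof (induction T arbitrary: M rule: finite_induct)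
  case empty
  have "M + c \<cdot>\<^sub>m diag_indicator n {} = M"
    by (rule eq_matI) (use empty in \<open>auto simp: diag_indicator_def\<close>)
  thus ?case using keep_rows_lessThan[OF empty(1)] by simp
next
  case (insert t T)
  note M = insert.prems(1)
  have t: "t < n" and Tn: "T \<subseteq> {..<n}" using insert.prems(2) by auto
  define Y where "Y = M + c \<cdot>\<^sub>m diag_indicator n T"
  define M' where "M' = replace_row M t (unit_vec n t)"
  have Y: "Y \<in> carrier_mat n n" unfolding Y_def using M by auto
  have M': "M' \<in> carrier_mat n n" unfolding M'_def using M by auto
  have "M + c \<cdot>\<^sub>m diag_indicator n (insert t T) = replace_row Y t (row Y t + c \<cdot>\<^sub>v unit_vec n t)"
    by (rule eq_matI) (use M t insert.hyps(2) in \<open>auto simp: Y_def diag_indicator_def\<close>)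
  moreover have "replace_row Y t (unit_vec n t) = M' + c \<cdot>\<^sub>m diag_indicator n T"
    by (rule eq_matI) (use M t insert.hyps(2) in \<open>auto simp: Y_def M'_def diag_indicator_def\<close>)
  ultimately have "det (M + c \<cdot>\<^sub>m diag_indicator n (insert t T)) =
      det Y + c * det (M' + c \<cdot>\<^sub>m diag_indicator n T)"
    using det_replace_row_add_smult[OF Y t row_carrier_vec[of t] unit_vec_carrier, where c = c]
      Y t replace_row_self[OF Y] by simp
  also have "det (M' + c \<cdot>\<^sub>m diag_indicator n T) =
      (\<Sum>U\<in>Pow T. c ^ card U * det (keep_rows M ({..<n} - insert t U)))"
  proof -
    have "keep_rows M' ({..<n} - U) = keep_rows M ({..<n} - insert t U)" if "U \<in> Pow T" for U
      by (rule eq_matI) (use M that insert.hyps(2) t in \<open>auto simp: keep_rows_def M'_def\<close>)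
    thus ?thesis unfolding insert.IH[OF M' Tn] by (intro sum.cong) auto
  qed
  finally show ?case
    unfolding sum_Pow_insert_power[OF insert.hyps] Y_def insert.IH[OF M Tn] .
qed

definition minor_coeff :: "'a::comm_ring_1 mat \<Rightarrow> nat set \<Rightarrow> nat \<Rightarrow> 'a" where
  "minor_coeff M T j =
     (\<Sum>U\<in>{U. U \<subseteq> T \<and> card U = j}. principal_minor M ({..<dim_row M} - U))"

lemma det_add_smult_diag_indicator:
  fixes M :: "'a::comm_ring_1 mat"
  assumes M: "M \<in> carrier_mat n n" and T: "T \<subseteq> {..<n}"
  shows "det (M + c \<cdot>\<^sub>m diag_indicator n T) = (\<Sum>j\<le>n. c ^ j * minor_coeff M T j)"
proof -
  have fT: "finite T" using T finite_subset by blast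
  have "det (M + c \<cdot>\<^sub>m diag_indicator n T) =
      (\<Sum>U\<in>Pow T. c ^ card U * principal_minor M ({..<n} - U))"
    unfolding det_add_smult_diag_indicator_keep_rows[OF fT M T] using M
    by (intro sum.cong) (auto simp: det_keep_rows)
  also have "\<dots> = (\<Sum>j\<le>n. \<Sum>U\<in>{U. U \<in> Pow T \<and> card U = j}. c ^ card U * principal_minor M ({..<n} - U))"
  proof (rule sum.group[symmetric])
    show "card ` Pow T \<subseteq> {..n}"
      using T by (auto intro!: card_mono[of "{..<n}", simplified] dest: subset_trans)
  qed (use fT in auto)
  also have "\<dots> = (\<Sum>j\<le>n. c ^ j * minor_coeff M T j)"
  proof (rule sum.cong[OF refl])
    fix j
    have "(\<Sum>U\<in>{U. U \<in> Pow T \<and> card U = j}. c ^ card U * principal_minor M ({..<n} - U)) =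
        (\<Sum>U\<in>{U. U \<subseteq> T \<and> card U = j}. c ^ j * principal_minor M ({..<n} - U))"
      by (rule sum.cong) auto
    thus "(\<Sum>U\<in>{U. U \<in> Pow T \<and> card U = j}. c ^ card U * principal_minor M ({..<n} - U)) =
        c ^ j * minor_coeff M T j"
      unfolding minor_coeff_def using M by (simp add: sum_distrib_left)
  qed
  finally show ?thesis .
qed

lemma minor_coeff_complement:
  fixes M :: "'a::comm_ring_1 mat"
  assumes M: "M \<in> carrier_mat n n" and r: "r \<le> n" and T: "T \<subseteq> {..<n}"
  shows "minor_coeff M T (n - r) = (\<Sum>\<alpha>\<in>{\<alpha>\<in>index_sets r n. {..<n} - T \<subseteq> \<alpha>}. principal_minor M \<alpha>)"
  unfolding minor_coeff_def
proof (rule sum.reindex_bij_witness[of _ "\<lambda>\<alpha>. {..<n} - \<alpha>" "\<lambda>U. {..<n} - U"])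
  fix U assume U: "U \<in> {U. U \<subseteq> T \<and> card U = n - r}"
  hence Un: "U \<subseteq> {..<n}" using T by auto
  show "{..<n} - ({..<n} - U) = U" using Un by auto
  have "card ({..<n} - U) = n - card U" using Un by (simp add: card_Diff_subset finite_subset)
  thus "{..<n} - U \<in> {\<alpha> \<in> index_sets r n. {..<n} - T \<subseteq> \<alpha>}"
    using U r unfolding index_sets_def by auto
  show "principal_minor M ({..<n} - U) = principal_minor M ({..<dim_row M} - U)"
    using M by simp
next
  fix \<alpha> assume a: "\<alpha> \<in> {\<alpha> \<in> index_sets r n. {..<n} - T \<subseteq> \<alpha>}"
  hence an: "\<alpha> \<subseteq> {..<n}" "card \<alpha> = r" unfolding index_sets_def by auto
  show "{..<n} - ({..<n} - \<alpha>) = \<alpha>" using an by auto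
  have "card ({..<n} - \<alpha>) = n - r" using an by (simp add: card_Diff_subset finite_subset)
  thus "{..<n} - \<alpha> \<in> {U. U \<subseteq> T \<and> card U = n - r}" using a by auto
qed

lemma minor_coeff_0:
  assumes M: "M \<in> carrier_mat n n" and T: "T \<subseteq> {..<n}"
  shows "minor_coeff M T 0 = det M"
proof -
  have "{U. U \<subseteq> T \<and> card U = 0} = {{}}"
    using T by (auto simp: card_eq_0_iff dest: finite_subset)
  thus ?thesis unfolding minor_coeff_def using M by (simp add: principal_minor_lessThan)
qed

lemma minor_coeff_lessThan:
  assumes "M \<in> carrier_mat n n" and "r \<le> n"
  shows "minor_coeff M {..<n} (n - r) = dr r M"
  using minor_coeff_complement[OF assms] assms(1) unfolding dr_def by simp

section \<open>Minors of products\<close>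

lemma det_mult_eq_0_if_inner_dim_less:
  fixes P Q :: "'a::field mat"
  assumes P: "P \<in> carrier_mat k p" and Q: "Q \<in> carrier_mat p k" and pk: "p < k"
  shows "det (P * Q) = 0"
proof -
  \<comment> \<open>pad \<open>P\<close> with zero columns and \<open>Q\<close> with zero rows to square matrices\<close>
  define P' where "P' = mat k k (\<lambda>(i,j). if j < p then P $$ (i,j) else 0)"
  define Q' where "Q' = mat k k (\<lambda>(i,j). if i < p then Q $$ (i,j) else 0)"
  have P': "P' \<in> carrier_mat k k" and Q': "Q' \<in> carrier_mat k k" unfolding P'_def Q'_def by auto
  have "P' * Q' = P * Q"
  proof (rule eq_matI)
    fix i j assume "i < dim_row (P * Q)" "j < dim_col (P * Q)"
    hence i: "i < k" and j: "j < k" using P Q by auto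
    have "(P' * Q') $$ (i,j) = (\<Sum>l\<in>{0..<k}. if l < p then P $$ (i,l) * Q $$ (l,j) else 0)"
      using i j pk unfolding P'_def Q'_def by (auto simp: scalar_prod_def intro!: sum.cong)
    also have "\<dots> = (\<Sum>l\<in>{0..<k} \<inter> {l. l < p}. P $$ (i,l) * Q $$ (l,j))"
      by (simp add: sum.inter_restrict)
    also have "{0..<k} \<inter> {l. l < p} = {0..<p}" using pk by auto
    also have "(\<Sum>l\<in>{0..<p}. P $$ (i,l) * Q $$ (l,j)) = (P * Q) $$ (i,j)"
      using P Q i j by (auto simp: scalar_prod_def)
    finally show "(P' * Q') $$ (i, j) = (P * Q) $$ (i, j)" .
  qed (use P Q P' Q' in auto)
  moreover have "det P' = 0"
  proof -
    have "P' *\<^sub>v unit_vec k (k - 1) = 0\<^sub>v k"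
      by (rule eq_vecI) (use pk in \<open>auto simp: P'_def scalar_prod_right_unit\<close>)
    moreover have "unit_vec k (k - 1) \<noteq> 0\<^sub>v k"
      using pk by (auto simp: unit_vec_def zero_vec_def vec_eq_iff)
    ultimately show ?thesis using det_0_iff_vec_prod_zero_field[OF P'] unit_vec_carrier by blast
  qed
  ultimately show ?thesis using det_mult[OF P' Q'] by simp
qed

lemma submatrix_mult:
  fixes P Q :: "'a::comm_ring_1 mat"
  assumes P: "P \<in> carrier_mat m p" and Q: "Q \<in> carrier_mat p m" and S: "S \<subseteq> {..<m}"
  shows "submatrix (P * Q) S S = submatrix P S UNIV * submatrix Q UNIV S"
proof -
  have cS: "card {i. i < m \<and> i \<in> S} = card S" using S by (rule card_lessThan_Int)
  show ?thesis
  proof (rule eq_matI)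
    fix a b assume "a < dim_row (submatrix P S UNIV * submatrix Q UNIV S)"
      and "b < dim_col (submatrix P S UNIV * submatrix Q UNIV S)"
    hence a: "a < card S" and b: "b < card S" using P Q cS by (auto simp: dim_submatrix)
    have "pick S a < m" "pick S b < m" using pick_in_set_le[OF a] pick_in_set_le[OF b] S by auto
    hence "submatrix (P * Q) S S $$ (a,b) = (\<Sum>l\<in>{0..<p}. P $$ (pick S a, l) * Q $$ (l, pick S b))"
      using P Q cS a b by (auto simp: submatrix_index scalar_prod_def)
    also have "\<dots> = (submatrix P S UNIV * submatrix Q UNIV S) $$ (a,b)"
      using P Q a b cS
      by (auto simp: scalar_prod_def submatrix_index dim_submatrix pick_UNIV intro!: sum.cong)
    finally show "submatrix (P * Q) S S $$ (a, b) = (submatrix P S UNIV * submatrix Q UNIV S) $$ (a, b)" .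
  qed (use P Q in \<open>simp_all add: dim_submatrix\<close>)
qed

lemma principal_minor_mult_eq_0:
  fixes P Q :: "'a::field mat"
  assumes P: "P \<in> carrier_mat m p" and Q: "Q \<in> carrier_mat p m" and S: "S \<subseteq> {..<m}"
    and c: "card S > p"
  shows "principal_minor (P * Q) S = 0"
proof -
  have cS: "card {i. i < m \<and> i \<in> S} = card S" using S by (rule card_lessThan_Int)
  have "submatrix P S UNIV \<in> carrier_mat (card S) p" using P cS by (auto simp: dim_submatrix)
  moreover have "submatrix Q UNIV S \<in> carrier_mat p (card S)" using Q cS by (auto simp: dim_submatrix)
  ultimately show ?thesis
    unfolding principal_minor_def submatrix_mult[OF P Q S]
    using det_mult_eq_0_if_inner_dim_less c by blast
qed

lemma replace_row_mult:
  fixes P Q R :: "'a::comm_ring_1 mat"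
  assumes P: "P \<in> carrier_mat m p" and Q: "Q \<in> carrier_mat p q" and R: "R \<in> carrier_mat 1 p"
  shows "replace_row (P * Q) i (row (R * Q) 0) = replace_row P i (row R 0) * Q"
proof (rule eq_matI)
  fix k l assume "k < dim_row (replace_row P i (row R 0) * Q)"
    "l < dim_col (replace_row P i (row R 0) * Q)"
  hence k: "k < m" and l: "l < q" using P Q by auto
  have "row (replace_row P i (row R 0)) k = (if k = i then row R 0 else row P k)"
    by (rule eq_vecI) (use P R k in auto)
  thus "replace_row (P * Q) i (row (R * Q) 0) $$ (k, l) = (replace_row P i (row R 0) * Q) $$ (k, l)"
    using P Q R k l by auto
qed (use P Q in auto)

lemma replace_row_add_smult_one:
  assumes "B \<in> carrier_mat m m" and "i < m"
  shows "replace_row (B + c \<cdot>\<^sub>m 1\<^sub>m m) i w = replace_row B i w + c \<cdot>\<^sub>m diag_indicator m ({..<m} - {i})"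
  by (rule eq_matI) (use assms in \<open>auto simp: diag_indicator_def\<close>)

lemma transpose_add_smult_one_mult_vec:
  fixes B :: "'a::comm_ring_1 mat"
  assumes B: "B \<in> carrier_mat m m" and x: "x \<in> carrier_vec m"
  shows "transpose_mat (B + c \<cdot>\<^sub>m 1\<^sub>m m) *\<^sub>v x = transpose_mat B *\<^sub>v x + c \<cdot>\<^sub>v x"
proof -
  have "transpose_mat (B + c \<cdot>\<^sub>m 1\<^sub>m m) = transpose_mat B + c \<cdot>\<^sub>m 1\<^sub>m m"
    by (rule eq_matI) (use B in auto)
  moreover have "(c \<cdot>\<^sub>m 1\<^sub>m m) *\<^sub>v x = c \<cdot>\<^sub>v x"
  proof (rule eq_vecI)
    fix l assume "l < dim_vec (c \<cdot>\<^sub>v x)"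
    hence l: "l < m" using x by simp
    have "row (c \<cdot>\<^sub>m 1\<^sub>m m) l = c \<cdot>\<^sub>v unit_vec m l" by (rule eq_vecI) (use l in auto)
    thus "((c \<cdot>\<^sub>m 1\<^sub>m m) *\<^sub>v x) $ l = (c \<cdot>\<^sub>v x) $ l"
      using l x by (simp add: smult_scalar_prod_distrib[of _ m] scalar_prod_left_unit)
  qed (use x in simp)
  ultimately show ?thesis using B x by (simp add: add_mult_distrib_mat_vec[of _ m m])
qed

section \<open>Sylvester's identity and coefficient comparison\<close>

lemma det_four_block_schur_left:
  fixes F K :: "'a::idom mat"
  assumes F: "F \<in> carrier_mat m r" and K: "K \<in> carrier_mat r m"
  shows "det (four_block_mat (c \<cdot>\<^sub>m 1\<^sub>m m) (- F) K (1\<^sub>m r)) = det (F * K + c \<cdot>\<^sub>m 1\<^sub>m m)"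
proof -
  define M where "M = four_block_mat (c \<cdot>\<^sub>m 1\<^sub>m m) (- F) K (1\<^sub>m r)"
  define L where "L = four_block_mat (1\<^sub>m m) F (0\<^sub>m r m) (1\<^sub>m r)"
  have M: "M \<in> carrier_mat (m + r) (m + r)" and L: "L \<in> carrier_mat (m + r) (m + r)"
    unfolding M_def L_def using F K by auto
  have FK: "F * K \<in> carrier_mat m m" using F K by auto
  have "L * M = four_block_mat (1\<^sub>m m * (c \<cdot>\<^sub>m 1\<^sub>m m) + F * K) (1\<^sub>m m * (- F) + F * 1\<^sub>m r)
      (0\<^sub>m r m * (c \<cdot>\<^sub>m 1\<^sub>m m) + 1\<^sub>m r * K) (0\<^sub>m r m * (- F) + 1\<^sub>m r * 1\<^sub>m r)"
    unfolding L_def M_def by (rule mult_four_block_mat) (use F K in auto)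
  also have "\<dots> = four_block_mat (F * K + c \<cdot>\<^sub>m 1\<^sub>m m) (0\<^sub>m m r) K (1\<^sub>m r)"
  proof -
    have "- (0\<^sub>m r r :: 'a mat) = 0\<^sub>m r r" by (rule eq_matI) auto
    thus ?thesis using F K FK by (simp add: comm_add_mat[of _ m m])
  qed
  finally have LM: "L * M = four_block_mat (F * K + c \<cdot>\<^sub>m 1\<^sub>m m) (0\<^sub>m m r) K (1\<^sub>m r)" .
  have "det (L * M) = det (F * K + c \<cdot>\<^sub>m 1\<^sub>m m)"
    unfolding LM by (subst det_four_block_mat_upper_right_zero[of _ m _ r]) (use FK K in auto)
  moreover have "det L = 1"
    unfolding L_def by (subst det_four_block_mat_lower_left_zero[of _ m _ r]) (use F in auto)
  ultimately show ?thesis using det_mult[OF L M] unfolding M_def by simp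
qed

lemma det_four_block_schur_right:
  fixes F K :: "'a::idom mat"
  assumes F: "F \<in> carrier_mat m r" and K: "K \<in> carrier_mat r m"
  shows "c ^ r * det (four_block_mat (c \<cdot>\<^sub>m 1\<^sub>m m) (- F) K (1\<^sub>m r)) =
    c ^ m * det (K * F + c \<cdot>\<^sub>m 1\<^sub>m r)"
proof -
  define M where "M = four_block_mat (c \<cdot>\<^sub>m 1\<^sub>m m) (- F) K (1\<^sub>m r)"
  define L where "L = four_block_mat (1\<^sub>m m) (0\<^sub>m m r) (- K) (c \<cdot>\<^sub>m 1\<^sub>m r)"
  have M: "M \<in> carrier_mat (m + r) (m + r)" and L: "L \<in> carrier_mat (m + r) (m + r)"
    unfolding M_def L_def using F K by auto
  have KF: "K * F \<in> carrier_mat r r" using F K by auto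
  have "L * M = four_block_mat (1\<^sub>m m * (c \<cdot>\<^sub>m 1\<^sub>m m) + 0\<^sub>m m r * K) (1\<^sub>m m * (- F) + 0\<^sub>m m r * 1\<^sub>m r)
      ((- K) * (c \<cdot>\<^sub>m 1\<^sub>m m) + (c \<cdot>\<^sub>m 1\<^sub>m r) * K) ((- K) * (- F) + (c \<cdot>\<^sub>m 1\<^sub>m r) * 1\<^sub>m r)"
    unfolding L_def M_def by (rule mult_four_block_mat) (use F K in auto)
  also have "\<dots> = four_block_mat (c \<cdot>\<^sub>m 1\<^sub>m m) (- F) (0\<^sub>m r m) (K * F + c \<cdot>\<^sub>m 1\<^sub>m r)"
  proof -
    have "(- K) * (c \<cdot>\<^sub>m 1\<^sub>m m) = c \<cdot>\<^sub>m (- K)"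
      using K by (simp add: mult_smult_distrib[of _ r m _ m])
    also have "\<dots> = - (c \<cdot>\<^sub>m K)" by (rule eq_matI) (use K in auto)
    finally have "(- K) * (c \<cdot>\<^sub>m 1\<^sub>m m) = - (c \<cdot>\<^sub>m K)" .
    moreover have "(c \<cdot>\<^sub>m 1\<^sub>m r) * K = c \<cdot>\<^sub>m K"
      using K by (simp add: mult_smult_assoc_mat[of _ r r _ m])
    ultimately have "(- K) * (c \<cdot>\<^sub>m 1\<^sub>m m) + (c \<cdot>\<^sub>m 1\<^sub>m r) * K = 0\<^sub>m r m"
      using K by simp
    moreover have "(- K) * (- F) = K * F" by (rule eq_matI) (use F K in auto)
    ultimately show ?thesis using F K by simp
  qed
  finally have LM: "L * M = four_block_mat (c \<cdot>\<^sub>m 1\<^sub>m m) (- F) (0\<^sub>m r m) (K * F + c \<cdot>\<^sub>m 1\<^sub>m r)" .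
  have "det (L * M) = c ^ m * det (K * F + c \<cdot>\<^sub>m 1\<^sub>m r)"
    unfolding LM by (subst det_four_block_mat_lower_left_zero[of _ m _ r]) (use F KF in auto)
  moreover have "det L = c ^ r"
    unfolding L_def by (subst det_four_block_mat_upper_right_zero[of _ m _ r]) (use K in auto)
  ultimately show ?thesis using det_mult[OF L M] unfolding M_def by simp
qed

lemma det_sylvester:
  fixes F K :: "'a::idom mat"
  assumes "F \<in> carrier_mat m r" and "K \<in> carrier_mat r m"
  shows "c ^ r * det (F * K + c \<cdot>\<^sub>m 1\<^sub>m m) = c ^ m * det (K * F + c \<cdot>\<^sub>m 1\<^sub>m r)"
  using det_four_block_schur_left[OF assms] det_four_block_schur_right[OF assms] by simp

lemma sum_power_mult_power:
  fixes c :: "'a::comm_ring_1"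
  shows "(\<Sum>j\<le>N. c ^ j * f j) * c ^ s = (\<Sum>i\<le>N + s. c ^ i * (if s \<le> i then f (i - s) else 0))"
proof (induction N)
  case 0
  have "(\<Sum>i\<le>s. c ^ i * (if s \<le> i then f (i - s) else 0)) = (\<Sum>i\<le>s. if i = s then c ^ s * f 0 else 0)"
    by (rule sum.cong) auto
  thus ?case by (simp add: mult.commute)
next
  case (Suc N)
  have "(\<Sum>j\<le>Suc N. c ^ j * f j) * c ^ s = (\<Sum>j\<le>N. c ^ j * f j) * c ^ s + c ^ (Suc N + s) * f (Suc N)"
    by (simp add: algebra_simps power_add)
  thus ?case unfolding Suc.IH by simp
qed

lemma polyfun_coeff_eq:
  fixes f h :: "nat \<Rightarrow> 'a::{idom,real_normed_div_algebra}"
  assumes "\<And>c. (\<Sum>j\<le>N. c ^ j * f j) = (\<Sum>j\<le>N. c ^ j * h j)" and "k \<le> N"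
  shows "f k = h k"
  using assms polyfun_eq_coeffs[of f N h] by (simp add: mult.commute)

lemma polyfun_coeff_eq_shift:
  fixes f g h :: "nat \<Rightarrow> 'a::{idom,real_normed_div_algebra}"
  assumes eq: "\<And>c. (\<Sum>j\<le>N. c ^ j * f j) + c * (\<Sum>j\<le>N. c ^ j * g j) = (\<Sum>j\<le>N. c ^ j * h j)"
    and k: "k \<le> N"
  shows "f k + (if k = 0 then 0 else g (k - 1)) = h k"
proof -
  have extend: "(\<Sum>j\<le>N. c ^ j * u j) = (\<Sum>j\<le>N + 1. c ^ j * (if j \<le> N then u j else 0))"
    for c and u :: "nat \<Rightarrow> 'a"
  proof -
    have "(\<Sum>j\<le>N + 1. c ^ j * (if j \<le> N then u j else 0)) =
        (\<Sum>j\<le>N. c ^ j * (if j \<le> N then u j else 0))" by simp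
    also have "\<dots> = (\<Sum>j\<le>N. c ^ j * u j)" by (rule sum.cong) auto
    finally show ?thesis by simp
  qed
  have "c * (\<Sum>j\<le>N. c ^ j * g j) = (\<Sum>j\<le>N + 1. c ^ j * (if 1 \<le> j then g (j - 1) else 0))" for c
    using sum_power_mult_power[where c = c and N = N and f = g and s = 1] by (simp add: mult.commute)
  hence "(\<Sum>j\<le>N + 1. c ^ j * ((if j \<le> N then f j else 0) + (if 1 \<le> j then g (j - 1) else 0))) =
      (\<Sum>j\<le>N + 1. c ^ j * (if j \<le> N then h j else 0))" for c
    using eq[of c] unfolding extend[of c f] extend[of c h]
    by (simp add: distrib_left sum.distrib)
  from polyfun_coeff_eq[OF this, of k] k show ?thesis by auto
qed

section \<open>The principal-minor formula\<close>

text \<open>Comparing the coefficients of \<open>c\<^sup>m\<close> in Sylvester's identity.\<close>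

lemma dr_mult_eq_det_mult_swap:
  fixes F K :: "'a::real_normed_field mat"
  assumes F: "F \<in> carrier_mat m r" and K: "K \<in> carrier_mat r m" and rm: "r \<le> m"
  shows "dr r (F * K) = det (K * F)"
proof -
  have FK: "F * K \<in> carrier_mat m m" and KF: "K * F \<in> carrier_mat r r" using F K by auto
  define EB where "EB = minor_coeff (F * K) {..<m}"
  define EK where "EK = minor_coeff (K * F) {..<r}"
  have "(\<Sum>i\<le>m + r. c ^ i * (if r \<le> i then EB (i - r) else 0)) =
      (\<Sum>i\<le>m + r. c ^ i * (if m \<le> i then EK (i - m) else 0))" for c
  proof -
    have "(\<Sum>i\<le>m + r. c ^ i * (if r \<le> i then EB (i - r) else 0)) =
        c ^ r * det (F * K + c \<cdot>\<^sub>m 1\<^sub>m m)"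
      using sum_power_mult_power[where c = c and N = m and f = EB and s = r] det_add_smult_diag_indicator[OF FK, of "{..<m}" c]
      unfolding EB_def diag_indicator_lessThan by (simp add: mult.commute)
    also have "\<dots> = c ^ m * det (K * F + c \<cdot>\<^sub>m 1\<^sub>m r)" by (rule det_sylvester[OF F K])
    also have "\<dots> = (\<Sum>i\<le>r + m. c ^ i * (if m \<le> i then EK (i - m) else 0))"
      using sum_power_mult_power[where c = c and N = r and f = EK and s = m] det_add_smult_diag_indicator[OF KF, of "{..<r}" c]
      unfolding EK_def diag_indicator_lessThan by (simp add: mult.commute)
    finally show ?thesis by (simp add: add.commute)
  qed
  from polyfun_coeff_eq[OF this, of m] rm have "EB (m - r) = EK 0" by simp
  thus ?thesis
    unfolding EB_def EK_def minor_coeff_lessThan[OF FK rm] minor_coeff_0[OF KF order_refl] .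
qed

text \<open>Cramer's rule for the row \<open>(B + c I)\<^sup>T x = B\<^sup>T x + c x\<close> of \<open>B + c I\<close>, expanded in \<open>c\<close>.\<close>

lemma minor_coeff_replace_row_polynomial:
  fixes B :: "'a::comm_ring_1 mat"
  assumes B: "B \<in> carrier_mat m m" and x: "x \<in> carrier_vec m" and i: "i < m"
  defines "T \<equiv> {..<m} - {i}"
  shows "(\<Sum>j\<le>m. c ^ j * minor_coeff (replace_row B i (transpose_mat B *\<^sub>v x)) T j)
      + c * (\<Sum>j\<le>m. c ^ j * minor_coeff (replace_row B i x) T j)
    = (\<Sum>j\<le>m. c ^ j * (x $ i * minor_coeff B {..<m} j))"
proof -
  define g where "g = transpose_mat B *\<^sub>v x"
  have g: "g \<in> carrier_vec m" and T: "T \<subseteq> {..<m}" using B x unfolding g_def T_def by auto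
  have Bc: "B + c \<cdot>\<^sub>m 1\<^sub>m m \<in> carrier_mat m m" using B by simp
  have "det (replace_row (B + c \<cdot>\<^sub>m 1\<^sub>m m) i g) + c * det (replace_row (B + c \<cdot>\<^sub>m 1\<^sub>m m) i x)
      = x $ i * det (B + c \<cdot>\<^sub>m 1\<^sub>m m)"
    using det_replace_row_add_smult[OF Bc i g x, where c = c]
      det_replace_row_transpose_mult[OF Bc i x] transpose_add_smult_one_mult_vec[OF B x]
    unfolding g_def by simp
  moreover have "det (replace_row (B + c \<cdot>\<^sub>m 1\<^sub>m m) i w) =
      (\<Sum>j\<le>m. c ^ j * minor_coeff (replace_row B i w) T j)" for w
    using B T i by (simp add: replace_row_add_smult_one T_def det_add_smult_diag_indicator)
  moreover have "det (B + c \<cdot>\<^sub>m 1\<^sub>m m) = (\<Sum>j\<le>m. c ^ j * minor_coeff B {..<m} j)"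
    using det_add_smult_diag_indicator[OF B order_refl] unfolding diag_indicator_lessThan .
  ultimately show ?thesis unfolding g_def by (simp add: sum_distrib_left mult_ac)
qed

lemma minor_coeff_mult_eq_0:
  fixes P Q :: "'a::field mat"
  assumes P: "P \<in> carrier_mat m r" and Q: "Q \<in> carrier_mat r m" and T: "T \<subseteq> {..<m}"
    and j: "j + r < m"
  shows "minor_coeff (P * Q) T j = 0"
proof -
  have "principal_minor (P * Q) ({..<m} - U) = 0" if "U \<subseteq> T" "card U = j" for U
  proof (rule principal_minor_mult_eq_0[OF P Q])
    have "card ({..<m} - U) = m - j"
      using that T by (simp add: card_Diff_subset finite_subset)
    thus "card ({..<m} - U) > r" using j by simp
  qed auto
  moreover have "dim_row (P * Q) = m" using P by simp
  ultimately show ?thesis unfolding minor_coeff_def by simp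
qed

text \<open>The coefficient of \<open>c\<^sup>m\<^sup>-\<^sup>r\<close> of the polynomial identity above: the minors of order
  \<open>r + 1\<close> of the matrix with row \<open>i\<close> replaced by \<open>x\<close> vanish.\<close>

lemma principal_minors_replace_row_transpose_mult:
  fixes B :: "'a::real_normed_field mat"
  assumes B: "B \<in> carrier_mat m m" and x: "x \<in> carrier_vec m" and i: "i < m"
    and P: "P \<in> carrier_mat m r" and Q: "Q \<in> carrier_mat r m" and PQ: "replace_row B i x = P * Q"
  shows "x $ i * dr r B =
    (\<Sum>\<alpha>\<in>{\<alpha>\<in>index_sets r m. i \<in> \<alpha>}. principal_minor (replace_row B i (transpose_mat B *\<^sub>v x)) \<alpha>)"
proof (cases "r \<le> m")
  case False
  hence "index_sets r m = {}"
    unfolding index_sets_def by (auto dest: card_mono[OF finite_lessThan])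
  thus ?thesis unfolding dr_def using B by simp
next
  case rm: True
  define g where "g = transpose_mat B *\<^sub>v x"
  define T where "T = {..<m} - {i}"
  have T: "T \<subseteq> {..<m}" unfolding T_def by auto
  from polyfun_coeff_eq_shift[OF minor_coeff_replace_row_polynomial[OF B x i], of "m - r"]
  have "minor_coeff (replace_row B i g) T (m - r)
      + (if m - r = 0 then 0 else minor_coeff (replace_row B i x) T (m - r - 1))
      = x $ i * minor_coeff B {..<m} (m - r)"
    unfolding g_def T_def by simp
  moreover have "(if m - r = 0 then 0 else minor_coeff (replace_row B i x) T (m - r - 1)) = 0"
    unfolding PQ using minor_coeff_mult_eq_0[OF P Q T] by simp
  moreover have "{..<m} - T = {i}" using i unfolding T_def by auto
  hence "minor_coeff (replace_row B i g) T (m - r) =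
      (\<Sum>\<alpha>\<in>{\<alpha>\<in>index_sets r m. i \<in> \<alpha>}. principal_minor (replace_row B i g) \<alpha>)"
    using minor_coeff_complement[OF replace_row_carrier_mat[OF B] rm T] by simp
  ultimately show ?thesis
    unfolding g_def minor_coeff_lessThan[OF B rm] by (simp add: mult.commute)
qed

lemma index_sets_self: "index_sets m m = {{..<m}}"
proof -
  have "\<alpha> = {..<m}" if "\<alpha> \<subseteq> {..<m}" "card \<alpha> = m" for \<alpha>
    using that card_subset_eq[of "{..<m}" \<alpha>] by simp
  thus ?thesis unfolding index_sets_def by auto
qed

lemma dr_self: "M \<in> carrier_mat m m \<Longrightarrow> dr m M = det M"
  unfolding dr_def by (simp add: index_sets_self principal_minor_lessThan)

lemma row_mult_eq_transpose_mult_vec: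
  fixes R M :: "'a::comm_ring_1 mat"
  assumes "R \<in> carrier_mat 1 k" and "M \<in> carrier_mat k l"
  shows "row (R * M) 0 = transpose_mat M *\<^sub>v row R 0"
proof (rule eq_vecI)
  fix j assume "j < dim_vec (transpose_mat M *\<^sub>v row R 0)"
  hence j: "j < l" using assms by simp
  have "row R 0 \<bullet> col M j = col M j \<bullet> row R 0"
    by (rule comm_scalar_prod[of _ k]) (use assms j in auto)
  thus "row (R * M) 0 $ j = (transpose_mat M *\<^sub>v row R 0) $ j" using assms j by simp
qed (use assms in simp)

lemma dr_crank_gram_nonzero:
  fixes A :: "complex mat"
  assumes A: "A \<in> carrier_mat m n"
  shows "dr (crank A) (A * cadj A) \<noteq> 0"
proof -
  obtain F G where F: "F \<in> carrier_mat m (crank A)" and G: "G \<in> carrier_mat (crank A) n"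
    and AFG: "A = F * G" and dF: "det (cadj F * F) \<noteq> 0" and dG: "det (G * cadj G) \<noteq> 0"
    and rm: "crank A \<le> m"
    using full_rank_factorization[OF A] by metis
  note d = carrier_matD[OF F] carrier_matD[OF G]
  have "A * cadj A = F * (G * cadj G * cadj F)"
    unfolding AFG using d by (simp add: cadj_mult mult_mat_assoc)
  moreover have "G * cadj G * cadj F \<in> carrier_mat (crank A) m" using F G by auto
  ultimately have "dr (crank A) (A * cadj A) = det (G * cadj G * cadj F * F)"
    using dr_mult_eq_det_mult_swap[OF F _ rm] by simp
  also have "G * cadj G * cadj F * F = (G * cadj G) * (cadj F * F)"
    using d by (simp add: mult_mat_assoc)
  also have "det \<dots> = det (G * cadj G) * det (cadj F * F)"
    by (rule det_mult) (use F G in auto)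
  finally show ?thesis using dF dG by simp
qed

lemma mp_inverse_principal_minors:
  fixes A Y :: "complex mat"
  assumes A: "A \<in> carrier_mat m n" and Y: "Y \<in> carrier_mat 1 n" and i: "i < m"
  shows "row (Y * mp_inverse A) 0 $ i * dr (crank A) (A * cadj A) =
    (\<Sum>\<alpha>\<in>{\<alpha>\<in>index_sets (crank A) m. i \<in> \<alpha>}.
       principal_minor (replace_row (A * cadj A) i (row (Y * cadj A) 0)) \<alpha>)"
proof -
  define X where "X = mp_inverse A"
  have pX: "penrose A X" unfolding X_def by (rule penrose_mp_inverse[OF A])
  have X: "X \<in> carrier_mat n m" using pX A unfolding penrose_def by auto
  obtain F G where F: "F \<in> carrier_mat m (crank A)" and G: "G \<in> carrier_mat (crank A) n"
    and AFG: "A = F * G"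
    using full_rank_factorization[OF A] by metis
  note d = carrier_matD[OF A] carrier_matD[OF F] carrier_matD[OF G] carrier_matD[OF X]
    carrier_matD[OF Y]
  have B: "A * cadj A \<in> carrier_mat m m" using A by auto
  define x where "x = row (Y * X) 0"
  have x: "x \<in> carrier_vec m" unfolding x_def by (rule row_carrier_vec) (use Y X in auto)
  have "Y * cadj A = Y * (X * (A * cadj A))" by (simp only: penrose_mult_gram[OF pX])
  also have "\<dots> = Y * X * (A * cadj A)" using d by (simp add: mult_mat_assoc)
  finally have g: "row (Y * cadj A) 0 = transpose_mat (A * cadj A) *\<^sub>v x"
    unfolding x_def using row_mult_eq_transpose_mult_vec[OF _ B, of "Y * X"] Y X by simp
  \<comment> \<open>\<open>x\<close> lies in the row space of \<open>A\<^sup>* = G\<^sup>* F\<^sup>*\<close>, which has rank at most \<open>crank A\<close>\<close>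
  define W where "W = Y * X * cadj X * cadj G"
  have W: "W \<in> carrier_mat 1 (crank A)" unfolding W_def using Y X G by auto
  have cadjA: "cadj A = cadj G * cadj F" unfolding AFG using d by (simp add: cadj_mult)
  have "Y * X = Y * (X * cadj X * cadj A)"
    using penrose_eq_mult_cadj[OF pX] by (rule arg_cong)
  also have "\<dots> = Y * (X * cadj X * (cadj G * cadj F))" by (simp only: cadjA)
  also have "\<dots> = W * cadj F" unfolding W_def using d by (simp add: mult_mat_assoc)
  finally have "x = row (W * cadj F) 0" unfolding x_def by (rule arg_cong)
  moreover have "A * cadj A = A * cadj G * cadj F"
    unfolding cadjA using d by (simp add: mult_mat_assoc)
  ultimately have low_rank: "replace_row (A * cadj A) i x = replace_row (A * cadj G) i (row W 0) * cadj F"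
    using replace_row_mult[OF _ cadj_carrier_mat[OF F] W, of "A * cadj G" m i] A G by simp
  have "replace_row (A * cadj G) i (row W 0) \<in> carrier_mat m (crank A)"
    using A G by (auto intro!: carrier_matI)
  from principal_minors_replace_row_transpose_mult[OF B x i this cadj_carrier_mat[OF F] low_rank]
  show ?thesis unfolding X_def[symmetric] x_def[symmetric] g .
qed

theorem theorem3p3:
  fixes A :: "complex mat" and y :: "complex vec" and m n r :: nat
  assumes A: "A \<in> carrier_mat m n"
    and y: "y \<in> carrier_vec n"
  defines "x0 \<equiv> row (mat_of_rows n [y] * mp_inverse A) 0"
    and "g \<equiv> row (mat_of_rows n [y] * cadj A) 0"
  shows "(crank A = m \<longrightarrow>
           (\<forall>i<m. x0 $ i = det (replace_row (A * cadj A) i g) / det (A * cadj A)))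
       \<and> (crank A = r \<and> r \<le> n \<and> n < m \<longrightarrow>
           (\<forall>i<m. x0 $ i =
              (\<Sum>\<alpha>\<in>{\<alpha>\<in>index_sets r m. i \<in> \<alpha>}.
                   principal_minor (replace_row (A * cadj A) i g) \<alpha>)
              / dr r (A * cadj A)))"
proof -
  have B: "A * cadj A \<in> carrier_mat m m" using A by auto
  have Y: "mat_of_rows n [y] \<in> carrier_mat 1 n" using y by auto
  \<comment> \<open>valid for every rank\<close>
  have formula: "x0 $ i = (\<Sum>\<alpha>\<in>{\<alpha>\<in>index_sets (crank A) m. i \<in> \<alpha>}.
      principal_minor (replace_row (A * cadj A) i g) \<alpha>) / dr (crank A) (A * cadj A)" if "i < m" for i
    using mp_inverse_principal_minors[OF A Y that] dr_crank_gram_nonzero[OF A]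
    unfolding x0_def g_def by (simp add: eq_divide_eq)
  have "{\<alpha>\<in>index_sets m m. i \<in> \<alpha>} = {{..<m}}" if "i < m" for i
    using that by (auto simp: index_sets_self)
  hence "x0 $ i = det (replace_row (A * cadj A) i g) / det (A * cadj A)"
    if "crank A = m" "i < m" for i
    using formula[of i] that B by (simp add: dr_self principal_minor_lessThan)
  thus ?thesis using formula by blast
qed

end
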